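(* Let $B$ be the open unit disk and $u\in C^1(\overline B)$ be harmonic in $B$ with $\nabla u\neq0$ on $\partial B$. Let $\tilde u$ be a harmonic conjugate of $u$ and $f=u+i\tilde u$. Then $M=\mathrm{WN}(f(\partial B))-1$, where $M$ is the sum of the multiplicities of the critical points of $u$ in $B$.
   Context: The multiplicity of a critical point $z_0$ of $u$ is the order of vanishing at $z_0$ of the holomorphic function $\partial_xu-i\partial_yu$. For a closed curve parameterized by a $C^1$ map $\theta\mapsto F(e^{i\theta})$ with $\partial F/\partial\theta\neq0$, its winding number is $\mathrm{WN}=\frac1{2\pi}\int_{\partial B}\mathrm d\,\arg\left(\frac{\partial F}{\partial\theta}\right)$. *)

theory Defs
  imports "HOL-Complex_Analysis.Complex_Analysis"
begin

text \<open>We identify the plane with the complex numbers; z = x + i y.\<close>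

definition px :: "(complex \<Rightarrow> real) \<Rightarrow> complex \<Rightarrow> real" where
  "px u z = deriv (\<lambda>t. u (z + of_real t)) 0"

definition py :: "(complex \<Rightarrow> real) \<Rightarrow> complex \<Rightarrow> real" where
  "py u z = deriv (\<lambda>t. u (z + \<i> * of_real t)) 0"

definition C1_gradient_on :: "(complex \<Rightarrow> real) \<Rightarrow> (complex \<Rightarrow> complex) \<Rightarrow> complex set \<Rightarrow> bool" where
  "C1_gradient_on u g S \<longleftrightarrow> continuous_on S g \<and>
     (\<forall>z\<in>S. (u has_derivative (\<lambda>h. g z \<bullet> h)) (at z within S))"

definition harmonic_on :: "(complex \<Rightarrow> real) \<Rightarrow> complex set \<Rightarrow> bool" where
  "harmonic_on u S \<longleftrightarrow>
     (\<forall>z\<in>S. u differentiable (at z) \<and> px u differentiable (at z) \<and> py u differentiable (at z)) \<and>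
     continuous_on S (px (px u)) \<and> continuous_on S (py (px u)) \<and>
     continuous_on S (px (py u)) \<and> continuous_on S (py (py u)) \<and>
     (\<forall>z\<in>S. px (px u) z + py (py u) z = 0)"

text \<open>Winding number of the closed curve theta |-> F(e^{i theta}):
  (1/2pi) times the total change of arg of dF/dtheta over [0,2pi], i.e. the
  winding number around 0 of the curve t |-> dF/dtheta (2 pi t), t in [0,1].\<close>
definition WN :: "(complex \<Rightarrow> complex) \<Rightarrow> complex" where
  "WN F = winding_number (\<lambda>t. vector_derivative (\<lambda>\<theta>. F (cis \<theta>)) (at (2 * pi * t))) 0"

definition crit_mult :: "(complex \<Rightarrow> real) \<Rightarrow> complex \<Rightarrow> int" where
  "crit_mult u z0 = zorder (\<lambda>z. complex_of_real (px u z) - \<i> * complex_of_real (py u z)) z0"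

end

theory Submission
  imports Defs
begin

text \<open>The function \<open>h = u\<^sub>x - i u\<^sub>y\<close> is the complex derivative \<open>f'\<close>, so the critical points of \<open>u\<close>
  are the zeros of \<open>h\<close>, with the same multiplicities, and \<open>\<partial>f(e\<^sup>i\<^sup>\<theta>)/\<partial>\<theta> = i e\<^sup>i\<^sup>\<theta> h(e\<^sup>i\<^sup>\<theta>)\<close>.
  As \<open>h\<close> does not vanish on the unit circle, its zeros lie inside a circle \<open>|z| = r < 1\<close>.
  There the argument principle gives the winding number \<open>1 + M\<close> for the image of the circle
  under \<open>z \<mapsto> i z h(z)\<close>, and the zero-free annulus \<open>r \<le> |z| \<le> 1\<close> deforms this loop into the
  curve \<open>\<theta> \<mapsto> \<partial>f/\<partial>\<theta>\<close> without passing through 0.\<close>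

lemma deriv_along_line_eq_inner:
  fixes u :: "complex \<Rightarrow> real"
  assumes "(u has_derivative (\<lambda>k. g \<bullet> k)) (at z)"
  shows "deriv (\<lambda>t. u (z + e * of_real t)) 0 = g \<bullet> e"
proof -
  have "((\<lambda>t. z + e * of_real t) has_derivative (\<lambda>t. e * of_real t)) (at (0::real))"
    by (auto intro!: derivative_eq_intros)
  moreover have "(u has_derivative (\<lambda>k. g \<bullet> k)) (at (z + e * of_real 0))"
    using assms by simp
  ultimately have "((\<lambda>t. u (z + e * of_real t)) has_derivative (\<lambda>t. g \<bullet> (e * of_real t))) (at 0)"
    by (rule has_derivative_compose)
  moreover have "(\<lambda>t. g \<bullet> (e * of_real t)) = (*) (g \<bullet> e)"
    by (auto simp: inner_complex_def algebra_simps)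
  ultimately show ?thesis
    by (simp add: DERIV_imp_deriv has_field_derivative_def)
qed

lemma px_eq_Re_gradient:
  assumes "(u has_derivative (\<lambda>k. g \<bullet> k)) (at z)"
  shows "px u z = Re g"
  using deriv_along_line_eq_inner[OF assms, of 1] by (simp add: px_def inner_complex_def)

lemma py_eq_Im_gradient:
  assumes "(u has_derivative (\<lambda>k. g \<bullet> k)) (at z)"
  shows "py u z = Im g"
  using deriv_along_line_eq_inner[OF assms, of \<i>] by (simp add: py_def inner_complex_def)

lemma holomorphic_derivative_eq_cnj_gradient_Re:
  assumes "f holomorphic_on S" "open S" "z \<in> S"
    and "((\<lambda>w. Re (f w)) has_derivative (\<lambda>k. g \<bullet> k)) (at z)"
  shows "(f has_field_derivative cnj g) (at z)"
proof -
  have fd: "(f has_field_derivative deriv f z) (at z)"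
    using holomorphic_derivI assms(1-3) .
  then have "((\<lambda>w. Re (f w)) has_derivative (\<lambda>k. Re (deriv f z * k))) (at z)"
    unfolding has_field_derivative_def by (auto intro!: derivative_eq_intros)
  from has_derivative_unique[OF assms(4) this]
  have "g \<bullet> k = Re (deriv f z * k)" for k by metis
  from this[of 1] this[of \<i>] have "deriv f z = cnj g"
    by (simp add: inner_complex_def complex_eq_iff)
  with fd show ?thesis by simp
qed

lemma sum_crit_mult_eq_sum_zorder:
  assumes "open S"
    and "\<And>z. z \<in> S \<Longrightarrow> complex_of_real (px u z) - \<i> * complex_of_real (py u z) = h z"
  shows "(\<Sum>z\<in>{z \<in> S. px u z = 0 \<and> py u z = 0}. crit_mult u z) = (\<Sum>z\<in>{z \<in> S. h z = 0}. zorder h z)"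
proof (rule sum.cong)
  show "{z \<in> S. px u z = 0 \<and> py u z = 0} = {z \<in> S. h z = 0}"
    using assms(2) by (auto simp: complex_eq_iff simp flip: assms(2))
next
  fix z assume "z \<in> {z \<in> S. h z = 0}"
  then have "eventually (\<lambda>w. w \<in> S) (at z)"
    using eventually_at_in_open' assms(1) by blast
  then show "crit_mult u z = zorder h z"
    unfolding crit_mult_def by (rule zorder_cong[OF eventually_mono]) (use assms(2) in auto)
qed

lemma C1_gradient_on_imp_continuous_on:
  "C1_gradient_on u g S \<Longrightarrow> continuous_on S u"
  unfolding C1_gradient_on_def continuous_on_eq_continuous_within
  using has_derivative_continuous by blast

lemma C1_gradient_on_has_derivative_at:
  "C1_gradient_on u g S \<Longrightarrow> z \<in> interior S \<Longrightarrow> (u has_derivative (\<lambda>k. g z \<bullet> k)) (at z)"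
  unfolding C1_gradient_on_def using at_within_interior interior_subset by (metis subsetD)

lemma circle_arc_has_integral:
  fixes f f' :: "complex \<Rightarrow> complex"
  assumes der: "\<And>z. z \<in> ball 0 1 \<Longrightarrow> (f has_field_derivative f' z) (at z)"
    and "0 \<le> \<rho>" "\<rho> < 1" "a \<le> x"
  shows "((\<lambda>\<phi>. of_real \<rho> * \<i> * cis \<phi> * f' (of_real \<rho> * cis \<phi>)) has_integral
           f (of_real \<rho> * cis x) - f (of_real \<rho> * cis a)) {a..x}"
proof (rule fundamental_theorem_of_calculus[OF \<open>a \<le> x\<close>])
  fix \<phi> :: real
  have "((\<lambda>\<phi>. of_real \<rho> * cis \<phi>) has_vector_derivative of_real \<rho> * (\<i> * cis \<phi>)) (at \<phi>)"
    by (auto intro!: derivative_eq_intros simp: has_vector_derivative_def)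
  moreover have "of_real \<rho> * cis \<phi> \<in> ball 0 1"
    using assms by (simp add: norm_mult)
  ultimately have "((\<lambda>\<phi>. f (of_real \<rho> * cis \<phi>)) has_vector_derivative
      of_real \<rho> * \<i> * cis \<phi> * f' (of_real \<rho> * cis \<phi>)) (at \<phi>)"
    using field_vector_diff_chain_at der by (fastforce simp: o_def mult_ac)
  then show "((\<lambda>\<phi>. f (of_real \<rho> * cis \<phi>)) has_vector_derivative
      of_real \<rho> * \<i> * cis \<phi> * f' (of_real \<rho> * cis \<phi>)) (at \<phi> within {a..x})"
    by (rule has_vector_derivative_at_within)
qed

lemma unit_circle_arc_has_integral:
  fixes f f' :: "complex \<Rightarrow> complex"
  assumes contf: "continuous_on (cball 0 1) f" and contf': "continuous_on (cball 0 1) f'"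
    and der: "\<And>z. z \<in> ball 0 1 \<Longrightarrow> (f has_field_derivative f' z) (at z)"
    and "a \<le> x"
  shows "((\<lambda>\<phi>. \<i> * cis \<phi> * f' (cis \<phi>)) has_integral f (cis x) - f (cis a)) {a..x}"
proof -
  txt \<open>\<open>f'\<close> is the derivative only in the open disk, so pass to the limit along
    the circles of radius \<open>\<rho> n \<longrightarrow> 1\<close>, dominated by a bound on \<open>f'\<close>.\<close>
  define \<rho> where "\<rho> n = 1 - inverse (real (Suc n))" for n
  define q where "q = (\<lambda>n \<phi>. of_real (\<rho> n) * \<i> * cis \<phi> * f' (of_real (\<rho> n) * cis \<phi>))"
  have \<rho>: "0 \<le> \<rho> n" "\<rho> n < 1" for n
    by (auto simp: \<rho>_def field_simps)
  have \<rho>_lim: "\<rho> \<longlonglongrightarrow> 1 - 0"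
    unfolding \<rho>_def by (intro tendsto_intros LIMSEQ_inverse_real_of_nat)
  then have \<rho>_cis: "(\<lambda>n. of_real (\<rho> n) * cis \<phi>) \<longlonglongrightarrow> cis \<phi>" for \<phi>
    by (auto intro!: tendsto_eq_intros)
  have radial: "(\<lambda>n. F (of_real (\<rho> n) * cis \<phi>)) \<longlonglongrightarrow> F (cis \<phi>)"
    if "continuous_on (cball 0 1) F" for F :: "complex \<Rightarrow> complex" and \<phi>
    by (rule continuous_on_tendsto_compose[OF that \<rho>_cis])
       (use \<rho> in \<open>auto simp: norm_mult less_imp_le\<close>)
  obtain M where M: "\<And>z. z \<in> cball 0 1 \<Longrightarrow> norm (f' z) \<le> M"
    using compact_imp_bounded[OF compact_continuous_image[OF contf' compact_cball]]
    unfolding bounded_iff by (metis image_eqI)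
  show ?thesis
  proof (rule has_integral_dominated_convergence)
    show "(q n has_integral f (of_real (\<rho> n) * cis x) - f (of_real (\<rho> n) * cis a)) {a..x}" for n
      unfolding q_def using circle_arc_has_integral[OF der \<rho> \<open>a \<le> x\<close>] by simp
    show "(\<lambda>_. M) integrable_on {a..x}"
      by (rule integrable_const_ivl)
    show "\<forall>\<phi>\<in>{a..x}. norm (q n \<phi>) \<le> M" for n
    proof
      fix \<phi>
      have "norm (q n \<phi>) = \<rho> n * norm (f' (of_real (\<rho> n) * cis \<phi>))"
        using \<rho>[of n] by (simp add: q_def norm_mult)
      also have "\<dots> \<le> norm (f' (of_real (\<rho> n) * cis \<phi>))"
        using \<rho>[of n] by (intro mult_left_le_one_le) auto
      also have "\<dots> \<le> M"
        using \<rho>[of n] by (intro M) (simp add: norm_mult)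
      finally show "norm (q n \<phi>) \<le> M" .
    qed
    show "\<forall>\<phi>\<in>{a..x}. (\<lambda>n. q n \<phi>) \<longlonglongrightarrow> \<i> * cis \<phi> * f' (cis \<phi>)"
      unfolding q_def using \<rho>_lim radial[OF contf'] by (auto intro!: tendsto_eq_intros)
    show "(\<lambda>n. f (of_real (\<rho> n) * cis x) - f (of_real (\<rho> n) * cis a)) \<longlonglongrightarrow> f (cis x) - f (cis a)"
      by (intro tendsto_diff radial contf)
  qed
qed

lemma unit_circle_has_vector_derivative:
  fixes f f' :: "complex \<Rightarrow> complex"
  assumes contf: "continuous_on (cball 0 1) f" and contf': "continuous_on (cball 0 1) f'"
    and der: "\<And>z. z \<in> ball 0 1 \<Longrightarrow> (f has_field_derivative f' z) (at z)"
  shows "((\<lambda>\<theta>. f (cis \<theta>)) has_vector_derivative \<i> * cis \<theta> * f' (cis \<theta>)) (at \<theta>)"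
proof -
  define a where "a = \<theta> - 1"
  define q where "q = (\<lambda>\<phi>. \<i> * cis \<phi> * f' (cis \<phi>))"
  have "continuous_on {a..\<theta> + 1} q"
    unfolding q_def by (intro continuous_intros continuous_on_compose2[OF contf']) auto
  then have "((\<lambda>x. f (cis a) + integral {a..x} q) has_vector_derivative q \<theta>) (at \<theta> within {a..\<theta> + 1})"
    using has_vector_derivative_add[OF has_vector_derivative_const integral_has_vector_derivative]
    by (fastforce simp: a_def)
  then have "((\<lambda>x. f (cis a) + integral {a..x} q) has_vector_derivative q \<theta>) (at \<theta>)"
    by (simp add: a_def at_within_Icc_at)
  then have "((\<lambda>x. f (cis a) + integral {a..x} q) has_vector_derivative \<i> * cis \<theta> * f' (cis \<theta>)) (at \<theta>)"
    by (simp add: q_def)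
  then show ?thesis
  proof (rule has_vector_derivative_transform_within_open[where S = "{a<..}"])
    show "f (cis a) + integral {a..x} q = f (cis x)" if "x \<in> {a<..}" for x
      using integral_unique[OF unit_circle_arc_has_integral[OF contf contf' der, of a x]] that
      by (simp add: q_def)
  qed (auto simp: a_def q_def)
qed

lemma nonvanishing_near_unit_circle:
  fixes h :: "complex \<Rightarrow> 'a::real_normed_vector"
  assumes conth: "continuous_on (cball 0 1) h" and nz: "\<And>z. z \<in> sphere 0 1 \<Longrightarrow> h z \<noteq> 0"
  obtains r where "0 < r" "r < 1" "\<And>z. r \<le> norm z \<Longrightarrow> norm z \<le> 1 \<Longrightarrow> h z \<noteq> 0"
proof -
  define Z where "Z = {z \<in> cball 0 1. h z = 0}"
  have "closed Z"
    unfolding Z_def by (rule continuous_closed_preimage_constant[OF conth closed_cball])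
  moreover have "bounded Z"
    using bounded_cball[of 0 1] by (rule bounded_subset) (auto simp: Z_def)
  ultimately have "compact Z"
    by (simp add: compact_eq_bounded_closed)
  then have "compact (norm ` Z)"
    by (rule compact_continuous_image[OF continuous_on_norm_id])
  then have "compact (insert 0 (norm ` Z))"
    by (rule compact_insert)
  from compact_attains_sup[OF this insert_not_empty]
  obtain s where s: "s \<in> insert 0 (norm ` Z)" and s_max: "\<And>t. t \<in> insert 0 (norm ` Z) \<Longrightarrow> t \<le> s"
    by blast
  have "norm z < 1" if "z \<in> Z" for z
    using that nz[of z] by (auto simp: Z_def order_less_le)
  with s have "s < 1"
    by auto
  have "h z \<noteq> 0" if "(1 + s) / 2 \<le> norm z" "norm z \<le> 1" for z
  proof
    assume "h z = 0"
    then have "norm z \<le> s"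
      using s_max that by (auto simp: Z_def)
    with that \<open>s < 1\<close> show False by (simp add: field_simps)
  qed
  moreover have "0 \<le> s"
    using s_max[of 0] by simp
  ultimately show ?thesis
    using \<open>s < 1\<close> by (intro that[of "(1 + s) / 2"]) auto
qed

lemma finite_zeros_in_unit_ball:
  fixes h :: "complex \<Rightarrow> complex"
  assumes holo: "h holomorphic_on ball 0 1" and conth: "continuous_on (cball 0 1) h"
    and nz: "\<And>z. z \<in> sphere 0 1 \<Longrightarrow> h z \<noteq> 0"
  shows "finite {z \<in> ball 0 1. h z = 0}"
proof (cases "h constant_on ball 0 1")
  case True
  then obtain c where c: "\<And>z. z \<in> ball 0 1 \<Longrightarrow> h z = c"
    by (auto simp: constant_on_def)
  have "h 1 = c"
    by (rule continuous_constant_on_closure[of "ball 0 1"]) (use conth c in auto)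
  with nz[of 1] c have "{z \<in> ball 0 1. h z = 0} = {}"
    by auto
  then show ?thesis by (metis finite.emptyI)
next
  case False
  obtain r where "r < 1" and r: "\<And>z. r \<le> norm z \<Longrightarrow> norm z \<le> 1 \<Longrightarrow> h z \<noteq> 0"
    using nonvanishing_near_unit_circle[OF conth nz] by blast
  have "{z \<in> ball 0 1. h z = 0} = {z \<in> cball 0 r. h z = 0}"
    using r \<open>r < 1\<close> by force
  also have "finite \<dots>"
    using \<open>r < 1\<close> by (intro holomorphic_compact_finite_zeros[OF holo _ _ _ _ False]) auto
  finally show ?thesis .
qed

lemma homotopic_loops_circlepath_unit_circle:
  fixes \<Phi> :: "complex \<Rightarrow> complex"
  assumes cont: "continuous_on (cball 0 1) \<Phi>" and "0 < r" "r \<le> 1"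
    and nz: "\<And>z. r \<le> norm z \<Longrightarrow> norm z \<le> 1 \<Longrightarrow> \<Phi> z \<noteq> 0"
  shows "homotopic_loops (-{0}) (\<Phi> \<circ> circlepath 0 r) (\<lambda>t. \<Phi> (cis (2 * pi * t)))"
proof -
  define m where "m = (\<lambda>(s, t). (r + s * (1 - r)) *\<^sub>R cis (2 * pi * t))"
  have m_norm: "r \<le> norm (m p) \<and> norm (m p) \<le> 1" if "p \<in> {0..1} \<times> {0..1}" for p
  proof -
    have "0 \<le> fst p * (1 - r)" "fst p * (1 - r) \<le> 1 - r"
      using that \<open>r \<le> 1\<close> by (auto intro: mult_left_le_one_le)
    then show ?thesis
      using \<open>0 < r\<close> by (auto simp: m_def norm_mult split: prod.splits)
  qed
  have "continuous_on ({0..1} \<times> {0..1}) m"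
    unfolding m_def case_prod_beta by (intro continuous_intros)
  moreover have "m ` ({0..1} \<times> {0..1}) \<subseteq> cball 0 1"
    using m_norm by auto
  ultimately have "continuous_on ({0..1} \<times> {0..1}) (\<Phi> \<circ> m)"
    by (metis continuous_on_compose continuous_on_subset cont)
  moreover have "\<Phi> \<circ> m \<in> {0..1} \<times> {0..1} \<rightarrow> -{0}"
    using m_norm nz by fastforce
  ultimately show ?thesis
    unfolding homotopic_loops
  proof (intro exI[of _ "\<Phi> \<circ> m"] conjI ballI)
    show "(\<Phi> \<circ> m) (0, t) = (\<Phi> \<circ> circlepath 0 r) t" for t
      by (simp add: m_def circlepath cis_conv_exp scaleR_conv_of_real mult_ac)
    show "(\<Phi> \<circ> m) (1, t) = \<Phi> (cis (2 * pi * t))" for t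
      by (simp add: m_def)
    show "pathfinish ((\<Phi> \<circ> m) \<circ> Pair s) = pathstart ((\<Phi> \<circ> m) \<circ> Pair s)" for s
      by (simp add: pathfinish_def pathstart_def m_def)
  qed
qed

lemma winding_number_comp_eq_contour_integral:
  fixes \<Phi> :: "complex \<Rightarrow> complex"
  assumes holo: "\<Phi> holomorphic_on S" and "open S" and \<gamma>: "valid_path \<gamma>" "path_image \<gamma> \<subseteq> S"
    and nz: "\<And>w. w \<in> path_image \<gamma> \<Longrightarrow> \<Phi> w \<noteq> 0"
  shows "winding_number (\<Phi> \<circ> \<gamma>) 0 = contour_integral \<gamma> (\<lambda>w. deriv \<Phi> w / \<Phi> w) / (2 * pi * \<i>)"
proof -
  have "\<Phi> analytic_on S"
    using holo \<open>open S\<close> by (simp add: analytic_on_open)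
  have "valid_path (\<Phi> \<circ> \<gamma>)"
    using valid_path_compose_holomorphic[OF \<gamma>(1) holo \<open>open S\<close> \<gamma>(2)] .
  moreover have "0 \<notin> path_image (\<Phi> \<circ> \<gamma>)"
    using nz by (auto simp: path_image_compose)
  ultimately have "winding_number (\<Phi> \<circ> \<gamma>) 0 = contour_integral (\<Phi> \<circ> \<gamma>) (\<lambda>w. 1 / (w - 0)) / (2 * pi * \<i>)"
    by (simp add: winding_number_valid_path)
  also have "contour_integral (\<Phi> \<circ> \<gamma>) (\<lambda>w. 1 / (w - 0)) = contour_integral \<gamma> (\<lambda>w. deriv \<Phi> w / \<Phi> w)"
    using contour_integral_comp_analyticW[OF \<open>\<Phi> analytic_on S\<close> \<gamma>] by simp
  finally show ?thesis .
qed

lemma argument_principle_circlepath: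
  fixes k :: "complex \<Rightarrow> complex"
  assumes holo: "k holomorphic_on ball 0 R" and "0 < r" "r < R"
    and fin: "finite {z \<in> ball 0 R. k z = 0}" and inside: "{z \<in> ball 0 R. k z = 0} \<subseteq> ball 0 r"
  shows "contour_integral (circlepath 0 r) (\<lambda>w. deriv k w / k w) =
           2 * pi * \<i> * (\<Sum>z\<in>{z \<in> ball 0 R. k z = 0}. of_int (zorder k z))"
proof -
  have img: "path_image (circlepath 0 r) = sphere 0 r"
    using \<open>0 < r\<close> by simp
  have "contour_integral (circlepath 0 r) (\<lambda>w. deriv k w * 1 / k w) =
      2 * pi * \<i> * (\<Sum>z\<in>{z \<in> ball 0 R. k z = 0 \<or> z \<in> {}}. winding_number (circlepath 0 r) z * 1 * of_int (zorder k z))"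
  proof (rule argument_principle)
    show "path_image (circlepath 0 r) \<subseteq> ball 0 R - {z \<in> ball 0 R. k z = 0 \<or> z \<in> {}}"
      using img inside \<open>r < R\<close> by auto
    show "\<forall>z. z \<notin> ball 0 R \<longrightarrow> winding_number (circlepath 0 r) z = 0"
      using img \<open>r < R\<close> by (auto intro!: winding_number_zero_outside[of _ "ball 0 R"])
  qed (use holo fin in auto)
  also have "\<dots> = 2 * pi * \<i> * (\<Sum>z\<in>{z \<in> ball 0 R. k z = 0}. of_int (zorder k z))"
  proof -
    have "winding_number (circlepath 0 r) z = 1" if "z \<in> {z \<in> ball 0 R. k z = 0}" for z
      using that inside by (intro winding_number_circlepath) auto
    then show ?thesis by (auto intro!: sum.cong)
  qed
  finally show ?thesis by simp
qed

lemma winding_number_circlepath_comp_times: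
  fixes k :: "complex \<Rightarrow> complex"
  assumes holo: "k holomorphic_on ball 0 R" and "c \<noteq> 0" "0 < r" "r < R"
    and fin: "finite {z \<in> ball 0 R. k z = 0}" and inside: "{z \<in> ball 0 R. k z = 0} \<subseteq> ball 0 r"
  shows "winding_number ((\<lambda>z. c * z * k z) \<circ> circlepath 0 r) 0 =
           1 + (\<Sum>z\<in>{z \<in> ball 0 R. k z = 0}. of_int (zorder k z))"
proof -
  have on_circle: "w \<in> ball 0 R" "w \<noteq> 0" "k w \<noteq> 0" if "w \<in> path_image (circlepath 0 r)" for w
    using that inside \<open>0 < r\<close> \<open>r < R\<close> by auto
  have "winding_number ((\<lambda>z. c * z * k z) \<circ> circlepath 0 r) 0 =
      contour_integral (circlepath 0 r) (\<lambda>w. deriv (\<lambda>z. c * z * k z) w / (c * w * k w)) / (2 * pi * \<i>)"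
  proof (rule winding_number_comp_eq_contour_integral)
    show "(\<lambda>z. c * z * k z) holomorphic_on ball 0 R"
      using holo by (intro holomorphic_intros)
    show "path_image (circlepath 0 r) \<subseteq> ball 0 R"
      using on_circle(1) by blast
    show "c * w * k w \<noteq> 0" if "w \<in> path_image (circlepath 0 r)" for w
      using on_circle(2,3)[OF that] \<open>c \<noteq> 0\<close> by simp
  qed auto
  also have "contour_integral (circlepath 0 r) (\<lambda>w. deriv (\<lambda>z. c * z * k z) w / (c * w * k w)) =
      contour_integral (circlepath 0 r) (\<lambda>w. 1 / (w - 0) + deriv k w / k w)"
  proof (rule contour_integral_eq)
    fix w assume "w \<in> path_image (circlepath 0 r)"
    note w = on_circle[OF this]
    have "deriv (\<lambda>z. c * z * k z) w = c * k w + c * w * deriv k w"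
      using holomorphic_derivI[OF holo open_ball w(1)]
      by (intro DERIV_imp_deriv) (auto intro!: derivative_eq_intros)
    then show "deriv (\<lambda>z. c * z * k z) w / (c * w * k w) = 1 / (w - 0) + deriv k w / k w"
      using w \<open>c \<noteq> 0\<close> by (simp add: field_simps)
  qed
  also have "\<dots> = contour_integral (circlepath 0 r) (\<lambda>w. 1 / (w - 0)) +
                    contour_integral (circlepath 0 r) (\<lambda>w. deriv k w / k w)"
  proof (rule contour_integral_add)
    show "(\<lambda>w. 1 / (w - 0)) contour_integrable_on circlepath 0 r"
      using \<open>0 < r\<close> by (intro has_contour_integral_integrable[OF has_contour_integral_winding_number]) auto
    have "continuous_on (path_image (circlepath 0 r)) (deriv k)"
      "continuous_on (path_image (circlepath 0 r)) k"
      using holomorphic_deriv[OF holo open_ball] holo on_circle(1)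
      by (auto intro!: holomorphic_on_imp_continuous_on elim!: holomorphic_on_subset)
    then have "continuous_on (path_image (circlepath 0 r)) (\<lambda>w. deriv k w / k w)"
      using on_circle(3) by (intro continuous_intros) auto
    then show "(\<lambda>w. deriv k w / k w) contour_integrable_on circlepath 0 r"
      by (intro contour_integrable_continuous_circlepath) (use \<open>0 < r\<close> in auto)
  qed
  also have "contour_integral (circlepath 0 r) (\<lambda>w. 1 / (w - 0)) = 2 * pi * \<i>"
    using contour_integral_unique[OF has_contour_integral_winding_number[of "circlepath 0 r" 0]] \<open>0 < r\<close>
    by (simp add: winding_number_circlepath_centre)
  also have "contour_integral (circlepath 0 r) (\<lambda>w. deriv k w / k w) =
      2 * pi * \<i> * (\<Sum>z\<in>{z \<in> ball 0 R. k z = 0}. of_int (zorder k z))"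
    by (rule argument_principle_circlepath[OF holo \<open>0 < r\<close> \<open>r < R\<close> fin inside])
  also have "(2 * pi * \<i> + 2 * pi * \<i> * (\<Sum>z\<in>{z \<in> ball 0 R. k z = 0}. of_int (zorder k z))) / (2 * pi * \<i>) =
      1 + (\<Sum>z\<in>{z \<in> ball 0 R. k z = 0}. of_int (zorder k z))"
    by (simp add: field_simps)
  finally show ?thesis .
qed

theorem proposition3p6:
  fixes u v :: "complex \<Rightarrow> real" and g :: "complex \<Rightarrow> complex" and f :: "complex \<Rightarrow> complex"
  assumes C1: "C1_gradient_on u g (cball 0 1)"
    and harm: "harmonic_on u (ball 0 1)"
    and grad_nz: "\<And>z. z \<in> sphere 0 1 \<Longrightarrow> g z \<noteq> 0"
    and conj_harm: "harmonic_on v (ball 0 1)"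
    and conj_hol: "(\<lambda>z. complex_of_real (u z) + \<i> * complex_of_real (v z)) holomorphic_on ball 0 1"
    and conj_cont: "continuous_on (cball 0 1) v"
    and f_def: "f = (\<lambda>z. complex_of_real (u z) + \<i> * complex_of_real (v z))"
  shows "of_int (\<Sum>z\<in>{z \<in> ball 0 1. px u z = 0 \<and> py u z = 0}. crit_mult u z) = WN f - 1"
proof -
  define h where "h = (\<lambda>z. cnj (g z))"
  have grad: "(u has_derivative (\<lambda>k. g z \<bullet> k)) (at z)" if "z \<in> ball 0 1" for z
    using C1_gradient_on_has_derivative_at[OF C1] that by simp
  have contf: "continuous_on (cball 0 1) f"
    unfolding f_def using C1_gradient_on_imp_continuous_on[OF C1] conj_cont
    by (intro continuous_intros) (auto intro: continuous_on_of_real)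
  have conth: "continuous_on (cball 0 1) h"
    using C1 unfolding h_def C1_gradient_on_def by (intro continuous_intros) auto
  have fder: "(f has_field_derivative h z) (at z)" if "z \<in> ball 0 1" for z
    using holomorphic_derivative_eq_cnj_gradient_Re[OF conj_hol open_ball that] grad[OF that]
    by (simp add: f_def h_def)
  then have hholo: "h holomorphic_on ball 0 1"
    using holomorphic_deriv[OF conj_hol[folded f_def] open_ball]
    by (metis DERIV_imp_deriv holomorphic_transform)
  have h_nz: "h z \<noteq> 0" if "z \<in> sphere 0 1" for z
    using grad_nz[OF that] by (simp add: h_def)
  obtain r where "0 < r" "r < 1" and r: "\<And>z. r \<le> norm z \<Longrightarrow> norm z \<le> 1 \<Longrightarrow> h z \<noteq> 0"
    using nonvanishing_near_unit_circle[OF conth h_nz] by blast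
  define \<Phi> where "\<Phi> = (\<lambda>z. \<i> * z * h z)"
  have "winding_number (\<Phi> \<circ> circlepath 0 r) 0 = 1 + (\<Sum>z\<in>{z \<in> ball 0 1. h z = 0}. of_int (zorder h z))"
    unfolding \<Phi>_def using finite_zeros_in_unit_ball[OF hholo conth h_nz] r \<open>0 < r\<close> \<open>r < 1\<close>
    by (intro winding_number_circlepath_comp_times hholo) (auto simp: not_le[symmetric])
  moreover have "homotopic_loops (-{0}) (\<Phi> \<circ> circlepath 0 r) (\<lambda>t. \<Phi> (cis (2 * pi * t)))"
    unfolding \<Phi>_def using r \<open>0 < r\<close> \<open>r < 1\<close>
    by (intro homotopic_loops_circlepath_unit_circle continuous_intros conth) auto
  moreover have "WN f = winding_number (\<lambda>t. \<Phi> (cis (2 * pi * t))) 0"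
    unfolding WN_def \<Phi>_def
    using vector_derivative_at[OF unit_circle_has_vector_derivative[OF contf conth fder]] by simp
  moreover have "(\<Sum>z\<in>{z \<in> ball 0 1. px u z = 0 \<and> py u z = 0}. crit_mult u z) = (\<Sum>z\<in>{z \<in> ball 0 1. h z = 0}. zorder h z)"
    using px_eq_Re_gradient[OF grad] py_eq_Im_gradient[OF grad]
    by (intro sum_crit_mult_eq_sum_zorder) (auto simp: h_def complex_eq_iff)
  ultimately show ?thesis
    using winding_number_homotopic_loops by (simp add: of_int_sum)
qed

end
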